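(* Let $p\ge1$, let $(X,d_X),(Y,d_Y),(Z,d_Z)$ be pseudo-metric spaces, and let $(W,\mu)$, $(V,\gamma)$ be probability spaces. Let $f(x;w):X\times W\to Y$ be $\alpha$ lower-Hölder in expectation and $g(y;v):Y\times V\to Z$ be $\beta$ lower-Hölder in expectation, with $\alpha,\beta\ge1$. Then $(g\circ f)(x;w,v)=g(f(x;w);v)$, with $(w,v)$ distributed according to the product measure $\mu\times\gamma$, is $\alpha\beta$ lower-Hölder in expectation. Moreover, if $f$ and $g$ are uniformly Lipschitz, then so is $g\circ f$.
   Context: A parametric function $f(x;w)$ (measurable in $w$ for each fixed $x$) with a probability measure on parameters is $\alpha$ lower-Hölder in expectation if there is $c>0$ such that $c^p\le \mathbb{E}_{w}\left[\left(\frac{d_Y(f(x;w),f(x';w))}{d_X(x,x')^\alpha}\right)^p\right]$ for all $x,x'$ with $d_X(x,x')>0$. It is uniformly Lipschitz if there is $L>0$ such that $x\mapsto f(x;w)$ is $L$-Lipschitz for every parameter $w$. *)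

theory Defs
  imports "HOL-Probability.Probability"
begin

definition pseudo_metric :: "('a \<Rightarrow> 'a \<Rightarrow> real) \<Rightarrow> bool" where
  "pseudo_metric d \<longleftrightarrow>
     (\<forall>x y. 0 \<le> d x y) \<and> (\<forall>x. d x x = 0) \<and> (\<forall>x y. d x y = d y x) \<and>
     (\<forall>x y z. d x z \<le> d x y + d y z)"

definition lower_holder_exp ::
  "'w measure \<Rightarrow> ('x \<Rightarrow> 'x \<Rightarrow> real) \<Rightarrow> ('y \<Rightarrow> 'y \<Rightarrow> real)
    \<Rightarrow> ('x \<Rightarrow> 'w \<Rightarrow> 'y) \<Rightarrow> real \<Rightarrow> real \<Rightarrow> bool" where
  "lower_holder_exp M dX dY f \<alpha> p \<longleftrightarrow>
     (\<exists>c>0. \<forall>x x'. dX x x' > 0 \<longrightarrow>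
        ennreal (c powr p) \<le>
          (\<integral>\<^sup>+ w. ennreal ((dY (f x w) (f x' w) / (dX x x' powr \<alpha>)) powr p) \<partial>M))"

definition uniformly_lipschitz ::
  "'w measure \<Rightarrow> ('x \<Rightarrow> 'x \<Rightarrow> real) \<Rightarrow> ('y \<Rightarrow> 'y \<Rightarrow> real)
    \<Rightarrow> ('x \<Rightarrow> 'w \<Rightarrow> 'y) \<Rightarrow> bool" where
  "uniformly_lipschitz M dX dY f \<longleftrightarrow>
     (\<exists>L>0. \<forall>w\<in>space M. \<forall>x x'. dY (f x w) (f x' w) \<le> L * dX x x')"

definition param_comp ::
  "('y \<Rightarrow> 'v \<Rightarrow> 'z) \<Rightarrow> ('x \<Rightarrow> 'w \<Rightarrow> 'y) \<Rightarrow> 'x \<Rightarrow> 'w \<times> 'v \<Rightarrow> 'z" where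
  "param_comp g f x wv = g (f x (fst wv)) (snd wv)"

end

theory Submission
  imports Defs
begin

text \<open>Writing the lower-Hoelder condition in the equivalent form
  \<open>c\<^sup>p d(x,x')\<^sup>\<alpha>\<^sup>p \<le> E[d(f x, f x')\<^sup>p]\<close>, integrate the bound for \<open>g\<close> over the parameter of \<open>f\<close>
  (Tonelli): \<open>E[d(g(f x), g(f x'))\<^sup>p] \<ge> c\<^sub>g\<^sup>p E[(d(f x, f x')\<^sup>p)\<^sup>\<beta>]\<close>. Since \<open>\<beta> \<ge> 1\<close>, Jensen's
  inequality bounds the right side below by \<open>c\<^sub>g\<^sup>p (E[d(f x, f x')\<^sup>p])\<^sup>\<beta>\<close>, and the bound for \<open>f\<close>
  finishes the argument with constant \<open>c\<^sub>g c\<^sub>f\<^sup>\<beta>\<close>. Lipschitz constants simply multiply.\<close>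

lemma powr_tangent_line_le:
  fixes t K \<beta> :: real
  assumes "0 \<le> t" "0 < K" "1 < \<beta>"
  shows "\<beta> * K powr (\<beta> - 1) * t \<le> t powr \<beta> + (\<beta> - 1) * K powr \<beta>"
proof -
  define q where "q = \<beta> / (\<beta> - 1)"
  have q: "q > 1" "1/\<beta> + 1/q = 1" "1/q = (\<beta> - 1)/\<beta>"
    using assms unfolding q_def by (auto simp: field_simps)
  have "t * K powr (\<beta> - 1) \<le> t powr \<beta> / \<beta> + (K powr (\<beta> - 1)) powr q / q"
    by (rule Youngs_inequality) (use assms q in auto)
  also have "(K powr (\<beta> - 1)) powr q = K powr \<beta>"
    using assms by (simp add: powr_powr q_def)
  finally have "t * K powr (\<beta> - 1) \<le> t powr \<beta> / \<beta> + K powr \<beta> * ((\<beta> - 1)/\<beta>)"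
    using q(3) by (simp add: divide_inverse)
  then show ?thesis
    using assms by (simp add: field_simps mult_ac)
qed

lemma (in prob_space) powr_nn_integral_le:
  assumes [measurable]: "Y \<in> borel_measurable M" and Y_nonneg: "\<And>w. 0 \<le> Y w"
    and "1 \<le> \<beta>" "0 \<le> K" and K_le: "ennreal K \<le> (\<integral>\<^sup>+w. ennreal (Y w) \<partial>M)"
  shows "ennreal (K powr \<beta>) \<le> (\<integral>\<^sup>+w. ennreal (Y w powr \<beta>) \<partial>M)"
proof (cases "K = 0 \<or> \<beta> = 1")
  case True
  then show ?thesis
    using K_le Y_nonneg \<open>0 \<le> K\<close> by auto
next
  case False
  then have K: "K > 0" and \<beta>: "\<beta> > 1"
    using assms by auto
  text \<open>Integrate the tangent line of \<open>t \<mapsto> t\<^sup>\<beta>\<close> at \<open>K\<close>; the constant term integrates to itself since \<open>M\<close> has mass 1.\<close>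
  define A where "A = \<beta> * K powr (\<beta> - 1)"
  define B where "B = (\<beta> - 1) * K powr \<beta>"
  have A: "A \<ge> 0" and B: "B \<ge> 0"
    using \<beta> K by (auto simp: A_def B_def)
  have tangent: "ennreal A * ennreal (Y w) \<le> ennreal (Y w powr \<beta>) + ennreal B" for w
    using powr_tangent_line_le[OF Y_nonneg K \<beta>] A B Y_nonneg[of w]
    by (simp add: A_def B_def ennreal_mult[symmetric] ennreal_plus[symmetric] del: ennreal_plus)
  have "ennreal B + ennreal (K powr \<beta>) = ennreal A * ennreal K"
    using A B K \<beta> by (simp add: A_def B_def powr_diff field_simps ennreal_mult[symmetric]
        ennreal_plus[symmetric] del: ennreal_plus)
  also have "\<dots> \<le> ennreal A * (\<integral>\<^sup>+w. ennreal (Y w) \<partial>M)"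
    using K_le by (rule mult_left_mono) simp
  also have "\<dots> = (\<integral>\<^sup>+w. ennreal A * ennreal (Y w) \<partial>M)"
    by (simp add: nn_integral_cmult)
  also have "\<dots> \<le> (\<integral>\<^sup>+w. ennreal (Y w powr \<beta>) + ennreal B \<partial>M)"
    by (rule nn_integral_mono) (rule tangent)
  also have "\<dots> = ennreal B + (\<integral>\<^sup>+w. ennreal (Y w powr \<beta>) \<partial>M)"
    by (simp add: nn_integral_add emeasure_space_1 add.commute)
  finally show ?thesis
    by (simp add: ennreal_add_left_cancel_le)
qed

lemma ennreal_le_mult_inverse_iff:
  fixes a r :: real and I :: ennreal
  assumes "0 \<le> a" "0 < r"
  shows "ennreal a \<le> I * ennreal (1 / r) \<longleftrightarrow> ennreal (a * r) \<le> I"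
proof
  assume "ennreal a \<le> I * ennreal (1 / r)"
  then have "ennreal a * ennreal r \<le> I * ennreal (1 / r) * ennreal r"
    by (rule mult_right_mono) simp
  then show "ennreal (a * r) \<le> I"
    using assms by (simp add: mult.assoc ennreal_mult[symmetric])
next
  assume "ennreal (a * r) \<le> I"
  then have "ennreal (a * r) * ennreal (1 / r) \<le> I * ennreal (1 / r)"
    by (rule mult_right_mono) simp
  then show "ennreal a \<le> I * ennreal (1 / r)"
    using assms by (simp add: ennreal_mult[symmetric])
qed

lemma nn_integral_divide_powr:
  fixes h :: "'w \<Rightarrow> real"
  assumes "(\<lambda>w. ennreal (h w powr p)) \<in> borel_measurable M"
  shows "(\<integral>\<^sup>+w. ennreal ((h w / E) powr p) \<partial>M)
       = (\<integral>\<^sup>+w. ennreal (h w powr p) \<partial>M) * ennreal (1 / E powr p)"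
proof -
  have "(\<integral>\<^sup>+w. ennreal ((h w / E) powr p) \<partial>M)
      = (\<integral>\<^sup>+w. ennreal (h w powr p) * ennreal (1 / E powr p) \<partial>M)"
    by (rule nn_integral_cong) (simp add: powr_divide ennreal_mult[symmetric])
  also have "\<dots> = (\<integral>\<^sup>+w. ennreal (h w powr p) \<partial>M) * ennreal (1 / E powr p)"
    using assms by (rule nn_integral_multc)
  finally show ?thesis .
qed

lemma lower_holder_exp_iff_moment_bound:
  assumes [measurable]: "\<And>x x'. (\<lambda>w. dY (f x w) (f x' w)) \<in> borel_measurable M"
    and dX_nonneg: "\<And>x x'. 0 \<le> dX x x'"
  shows "lower_holder_exp M dX dY f \<gamma> p \<longleftrightarrow>
    (\<exists>c>0. \<forall>x x'. ennreal (c powr p * dX x x' powr (\<gamma> * p))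
                    \<le> (\<integral>\<^sup>+w. ennreal (dY (f x w) (f x' w) powr p) \<partial>M))"
proof -
  have "(dX x x' > 0 \<longrightarrow>
      ennreal (c powr p) \<le> (\<integral>\<^sup>+w. ennreal ((dY (f x w) (f x' w) / dX x x' powr \<gamma>) powr p) \<partial>M))
    \<longleftrightarrow> ennreal (c powr p * dX x x' powr (\<gamma> * p))
          \<le> (\<integral>\<^sup>+w. ennreal (dY (f x w) (f x' w) powr p) \<partial>M)" for c x x'
  proof (cases "dX x x' > 0")
    case True
    then show ?thesis
      by (simp add: nn_integral_divide_powr ennreal_le_mult_inverse_iff powr_powr)
  next
    case False
    then have "dX x x' = 0"
      using dX_nonneg[of x x'] by simp
    with False show ?thesis
      by simp
  qed
  then show ?thesis
    unfolding lower_holder_exp_def by presburger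
qed

lemma param_comp_moment_bound:
  assumes "prob_space M" "sigma_finite_measure N"
    and [measurable]: "(\<lambda>w. dY (f x w) (f x' w)) \<in> borel_measurable M"
    and [measurable]: "(\<lambda>wv. dZ (param_comp g f x wv) (param_comp g f x' wv))
                         \<in> borel_measurable (M \<Otimes>\<^sub>M N)"
    and dY_nonneg: "\<And>y y'. 0 \<le> dY y y'" and "1 \<le> \<beta>"
    and f_bound: "ennreal (cf powr p * dX x x' powr (\<alpha> * p))
                    \<le> (\<integral>\<^sup>+w. ennreal (dY (f x w) (f x' w) powr p) \<partial>M)"
    and g_bound: "\<And>y y'. ennreal (cg powr p * dY y y' powr (\<beta> * p))
                    \<le> (\<integral>\<^sup>+v. ennreal (dZ (g y v) (g y' v) powr p) \<partial>N)"
  shows "ennreal ((cg * cf powr \<beta>) powr p * dX x x' powr (\<alpha> * \<beta> * p))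
    \<le> (\<integral>\<^sup>+wv. ennreal (dZ (param_comp g f x wv) (param_comp g f x' wv) powr p) \<partial>(M \<Otimes>\<^sub>M N))"
proof -
  interpret M: prob_space M by fact
  interpret N: sigma_finite_measure N by fact
  define K where "K = cf powr p * dX x x' powr (\<alpha> * p)"
  have "ennreal ((cg * cf powr \<beta>) powr p * dX x x' powr (\<alpha> * \<beta> * p))
      = ennreal (cg powr p) * ennreal (K powr \<beta>)"
    by (simp add: K_def powr_mult powr_powr ennreal_mult[symmetric] mult_ac)
  also have "\<dots> \<le> ennreal (cg powr p) * (\<integral>\<^sup>+w. ennreal ((dY (f x w) (f x' w) powr p) powr \<beta>) \<partial>M)"
    using f_bound \<open>1 \<le> \<beta>\<close>
    by (intro mult_left_mono M.powr_nn_integral_le) (auto simp: K_def)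
  also have "\<dots> = (\<integral>\<^sup>+w. ennreal (cg powr p * dY (f x w) (f x' w) powr (\<beta> * p)) \<partial>M)"
    by (simp add: nn_integral_cmult[symmetric] ennreal_mult[symmetric] powr_powr mult.commute)
  also have "\<dots> \<le> (\<integral>\<^sup>+w. \<integral>\<^sup>+v. ennreal (dZ (g (f x w) v) (g (f x' w) v) powr p) \<partial>N \<partial>M)"
    by (intro nn_integral_mono g_bound)
  also have "\<dots> = (\<integral>\<^sup>+wv. ennreal (dZ (param_comp g f x wv) (param_comp g f x' wv) powr p) \<partial>(M \<Otimes>\<^sub>M N))"
  proof -
    have "(\<lambda>wv. ennreal (dZ (param_comp g f x wv) (param_comp g f x' wv) powr p))
        \<in> borel_measurable (M \<Otimes>\<^sub>M N)"
      by measurable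
    from N.nn_integral_fst[OF this] show ?thesis
      by (simp add: param_comp_def)
  qed
  finally show ?thesis .
qed

lemma uniformly_lipschitz_param_comp:
  assumes "uniformly_lipschitz M dX dY f" "uniformly_lipschitz N dY dZ g"
  shows "uniformly_lipschitz (M \<Otimes>\<^sub>M N) dX dZ (param_comp g f)"
proof -
  obtain Lf where Lf: "Lf > 0" "\<And>w x x'. w \<in> space M \<Longrightarrow> dY (f x w) (f x' w) \<le> Lf * dX x x'"
    using assms(1) unfolding uniformly_lipschitz_def by blast
  obtain Lg where Lg: "Lg > 0" "\<And>v y y'. v \<in> space N \<Longrightarrow> dZ (g y v) (g y' v) \<le> Lg * dY y y'"
    using assms(2) unfolding uniformly_lipschitz_def by blast
  have "dZ (param_comp g f x wv) (param_comp g f x' wv) \<le> Lg * Lf * dX x x'"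
    if "wv \<in> space (M \<Otimes>\<^sub>M N)" for wv x x'
  proof -
    have "fst wv \<in> space M" "snd wv \<in> space N"
      using that by (auto simp: space_pair_measure)
    then have "dZ (param_comp g f x wv) (param_comp g f x' wv) \<le> Lg * dY (f x (fst wv)) (f x' (fst wv))"
      using Lg(2) by (simp add: param_comp_def)
    also have "\<dots> \<le> Lg * (Lf * dX x x')"
      using Lf(2) Lg(1) \<open>fst wv \<in> space M\<close> by (simp add: mult_left_mono)
    finally show ?thesis
      by (simp add: mult_ac)
  qed
  with Lf(1) Lg(1) show ?thesis
    unfolding uniformly_lipschitz_def by (metis mult_pos_pos)
qed

theorem mainTheorem5:
  fixes dX :: "'x \<Rightarrow> 'x \<Rightarrow> real" and dY :: "'y \<Rightarrow> 'y \<Rightarrow> real"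
    and dZ :: "'z \<Rightarrow> 'z \<Rightarrow> real"
    and M :: "'w measure" and N :: "'v measure"
    and f :: "'x \<Rightarrow> 'w \<Rightarrow> 'y" and g :: "'y \<Rightarrow> 'v \<Rightarrow> 'z"
    and p \<alpha> \<beta> :: real
  assumes "1 \<le> p"
    and "pseudo_metric dX" and "pseudo_metric dY" and "pseudo_metric dZ"
    and "prob_space M" and "prob_space N"
    and f_meas: "\<And>x x'. (\<lambda>w. dY (f x w) (f x' w)) \<in> borel_measurable M"
    and g_meas: "\<And>y y'. (\<lambda>v. dZ (g y v) (g y' v)) \<in> borel_measurable N"
    and gf_meas: "\<And>x x'. (\<lambda>wv. dZ (param_comp g f x wv) (param_comp g f x' wv))
                           \<in> borel_measurable (M \<Otimes>\<^sub>M N)"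
    and "lower_holder_exp M dX dY f \<alpha> p"
    and "lower_holder_exp N dY dZ g \<beta> p"
    and "1 \<le> \<alpha>" and "1 \<le> \<beta>"
  shows "lower_holder_exp (M \<Otimes>\<^sub>M N) dX dZ (param_comp g f) (\<alpha> * \<beta>) p
       \<and> (uniformly_lipschitz M dX dY f \<and> uniformly_lipschitz N dY dZ g
            \<longrightarrow> uniformly_lipschitz (M \<Otimes>\<^sub>M N) dX dZ (param_comp g f))"
proof (intro conjI impI)
  have dX_nonneg: "\<And>x x'. 0 \<le> dX x x'" and dY_nonneg: "\<And>y y'. 0 \<le> dY y y'"
    using \<open>pseudo_metric dX\<close> \<open>pseudo_metric dY\<close> unfolding pseudo_metric_def by auto
  obtain cf where "cf > 0" and f_bound: "\<And>x x'. ennreal (cf powr p * dX x x' powr (\<alpha> * p))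
      \<le> (\<integral>\<^sup>+w. ennreal (dY (f x w) (f x' w) powr p) \<partial>M)"
    using \<open>lower_holder_exp M dX dY f \<alpha> p\<close>
    unfolding lower_holder_exp_iff_moment_bound[where dY = dY and f = f, OF f_meas dX_nonneg] by blast
  obtain cg where "cg > 0" and g_bound: "\<And>y y'. ennreal (cg powr p * dY y y' powr (\<beta> * p))
      \<le> (\<integral>\<^sup>+v. ennreal (dZ (g y v) (g y' v) powr p) \<partial>N)"
    using \<open>lower_holder_exp N dY dZ g \<beta> p\<close>
    unfolding lower_holder_exp_iff_moment_bound[where dY = dZ and f = g, OF g_meas dY_nonneg] by blast
  have "sigma_finite_measure N"
    using \<open>prob_space N\<close> by (rule prob_space_imp_sigma_finite)
  have "ennreal ((cg * cf powr \<beta>) powr p * dX x x' powr (\<alpha> * \<beta> * p))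
    \<le> (\<integral>\<^sup>+wv. ennreal (dZ (param_comp g f x wv) (param_comp g f x' wv) powr p) \<partial>(M \<Otimes>\<^sub>M N))"
    for x x'
    using \<open>prob_space M\<close> \<open>sigma_finite_measure N\<close> f_meas gf_meas dY_nonneg \<open>1 \<le> \<beta>\<close> f_bound g_bound
    by (rule param_comp_moment_bound)
  with \<open>cf > 0\<close> \<open>cg > 0\<close>
  show "lower_holder_exp (M \<Otimes>\<^sub>M N) dX dZ (param_comp g f) (\<alpha> * \<beta>) p"
    unfolding lower_holder_exp_iff_moment_bound[where dY = dZ and f = "param_comp g f", OF gf_meas dX_nonneg]
    by (auto intro!: exI[of _ "cg * cf powr \<beta>"])
next
  assume "uniformly_lipschitz M dX dY f \<and> uniformly_lipschitz N dY dZ g"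
  then show "uniformly_lipschitz (M \<Otimes>\<^sub>M N) dX dZ (param_comp g f)"
    by (blast intro: uniformly_lipschitz_param_comp)
qed

end
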